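(* Let $N\ge1$ be the number of rounds of \texttt{DEVI}$(\gamma,\mathcal P,N)$. Then $Q^{(N-1)}(s,a)-Q^{(N)}(s,a)\le\gamma^{N-1}$ for all $(s,a)\in\mathcal S\times\mathcal A$.
   Context: Finite $\mathcal S,\mathcal A$, reward $r:\mathcal S\times\mathcal A\to[0,1]$, sets $\mathcal S_{s,a}\subseteq\mathcal S$, $\gamma\in[0,1)$. $\mathcal P$ is a nonempty compact set (the confidence polytope given as input) of vectors $p\in[0,1]^{\mathcal S\times\mathcal A\times\mathcal S}$ with $\sum_{s'\in\mathcal S_{s,a}}p_{s,a,s'}=1$ for all $(s,a)$. \texttt{DEVI}$(\gamma,\mathcal P,N)$: $Q^{(0)}(s,a)=1/(1-\gamma)$; for $n=1,\dots,N$: $V^{(n-1)}(s)=\max_aQ^{(n-1)}(s,a)$ and $Q^{(n)}(s,a)=r(s,a)+\gamma\max_{p\in\mathcal P}\sum_{s'\in\mathcal S_{s,a}}p_{s,a,s'}V^{(n-1)}(s')$. *)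

theory Defs
  imports "HOL-Analysis.Analysis"
begin

definition devi_V :: "('s \<Rightarrow> 'a::finite \<Rightarrow> real) \<Rightarrow> 's \<Rightarrow> real" where
  "devi_V Q s = Max (range (Q s))"

text \<open>Transition vectors p are functions on S x A x S (product topology); the maximum
  over the compact set P is written as a supremum (it is attained).\<close>
primrec devi_Q :: "real \<Rightarrow> (('s \<times> 'a \<times> 's) \<Rightarrow> real) set \<Rightarrow> ('s \<Rightarrow> 'a \<Rightarrow> real)
    \<Rightarrow> ('s \<Rightarrow> 'a \<Rightarrow> 's set) \<Rightarrow> nat \<Rightarrow> 's \<Rightarrow> 'a::finite \<Rightarrow> real" where
  "devi_Q \<gamma> P r Ssa 0 = (\<lambda>s a. 1 / (1 - \<gamma>))"
| "devi_Q \<gamma> P r Ssa (Suc n) = (\<lambda>s a. r s a + \<gamma> *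
      (SUP p\<in>P. \<Sum>s'\<in>Ssa s a. p (s, a, s') * devi_V (devi_Q \<gamma> P r Ssa n) s'))"

end

theory Submission
  imports Defs
begin

text \<open>The update \<open>Q \<mapsto> r + \<gamma> * (SUP p\<in>P. \<Sum> p * max\<^sub>a Q)\<close> is a \<open>\<gamma>\<close>-contraction in
  the sup norm, because the maximum over actions, averaging against a probability vector and
  the supremum over \<open>P\<close> are all 1-Lipschitz. The first two iterates, \<open>1/(1-\<gamma>)\<close> and
  \<open>r + \<gamma>/(1-\<gamma>)\<close>, differ by \<open>1 - r \<le> 1\<close>, so the \<open>n\<close>-th and \<open>(n+1)\<close>-st iterates differ
  by at most \<open>\<gamma>^n\<close>.\<close>

lemma abs_cSUP_diff_le:
  fixes f g :: "'b \<Rightarrow> real"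
  assumes "A \<noteq> {}" "bdd_above (f ` A)" "bdd_above (g ` A)"
    and "\<And>x. x \<in> A \<Longrightarrow> \<bar>f x - g x\<bar> \<le> c"
  shows "\<bar>(SUP x\<in>A. f x) - (SUP x\<in>A. g x)\<bar> \<le> c"
proof -
  have "(SUP x\<in>A. f x) \<le> (SUP x\<in>A. g x) + c"
  proof (rule cSUP_least[OF assms(1)])
    fix x assume "x \<in> A"
    then show "f x \<le> (SUP x\<in>A. g x) + c"
      using assms(4) cSUP_upper[OF _ assms(3)] by fastforce
  qed
  moreover have "(SUP x\<in>A. g x) \<le> (SUP x\<in>A. f x) + c"
  proof (rule cSUP_least[OF assms(1)])
    fix x assume "x \<in> A"
    then show "g x \<le> (SUP x\<in>A. f x) + c"
      using assms(4) cSUP_upper[OF _ assms(2)] by fastforce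
  qed
  ultimately show ?thesis by linarith
qed

lemma devi_V_eq_SUP: "devi_V Q s = (SUP a. Q s a)"
  by (simp add: devi_V_def cSup_eq_Max)

lemma abs_devi_V_diff_le:
  fixes Q Q' :: "'s \<Rightarrow> 'a::finite \<Rightarrow> real"
  assumes "\<And>s a. \<bar>Q s a - Q' s a\<bar> \<le> c"
  shows "\<bar>devi_V Q s - devi_V Q' s\<bar> \<le> c"
  unfolding devi_V_eq_SUP
  by (rule abs_cSUP_diff_le) (auto intro: assms bdd_above_finite)

lemma abs_sum_stochastic_diff_le:
  fixes w f g :: "'b \<Rightarrow> real"
  assumes "\<And>x. x \<in> S \<Longrightarrow> 0 \<le> w x" "sum w S = 1"
    and "\<And>x. x \<in> S \<Longrightarrow> \<bar>f x - g x\<bar> \<le> c"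
  shows "\<bar>(\<Sum>x\<in>S. w x * f x) - (\<Sum>x\<in>S. w x * g x)\<bar> \<le> c"
proof -
  have "\<bar>(\<Sum>x\<in>S. w x * f x) - (\<Sum>x\<in>S. w x * g x)\<bar> = \<bar>\<Sum>x\<in>S. w x * (f x - g x)\<bar>"
    by (simp add: sum_subtractf right_diff_distrib)
  also have "\<dots> \<le> (\<Sum>x\<in>S. \<bar>w x * (f x - g x)\<bar>)"
    by (rule sum_abs)
  also have "\<dots> \<le> (\<Sum>x\<in>S. w x * c)"
    by (rule sum_mono) (simp add: abs_mult assms(1,3) mult_left_mono)
  also have "\<dots> = c"
    by (simp add: assms(2) sum_distrib_right[symmetric])
  finally show ?thesis .
qed

lemma bdd_above_weighted_sum:
  fixes V :: "'s \<Rightarrow> real"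
  assumes "\<And>p x. p \<in> P \<Longrightarrow> 0 \<le> p x \<and> p x \<le> 1"
  shows "bdd_above ((\<lambda>p. \<Sum>s'\<in>S. p (s, a, s') * V s') ` P)"
proof (rule bdd_aboveI2)
  fix p assume "p \<in> P"
  then have "p (s, a, s') * V s' \<le> \<bar>V s'\<bar>" for s'
    using assms[of p "(s, a, s')"]
    by (metis abs_ge_self abs_mult abs_of_nonneg dual_order.trans mult_left_le_one_le abs_ge_zero)
  then show "(\<Sum>s'\<in>S. p (s, a, s') * V s') \<le> (\<Sum>s'\<in>S. \<bar>V s'\<bar>)"
    by (rule sum_mono)
qed

definition devi_step ::
    "real \<Rightarrow> (('s \<times> 'a \<times> 's) \<Rightarrow> real) set \<Rightarrow> ('s \<Rightarrow> 'a \<Rightarrow> real) \<Rightarrow> ('s \<Rightarrow> 'a \<Rightarrow> 's set)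
      \<Rightarrow> ('s \<Rightarrow> 'a::finite \<Rightarrow> real) \<Rightarrow> 's \<Rightarrow> 'a \<Rightarrow> real" where
  "devi_step \<gamma> P r Ssa Q =
     (\<lambda>s a. r s a + \<gamma> * (SUP p\<in>P. \<Sum>s'\<in>Ssa s a. p (s, a, s') * devi_V Q s'))"

lemma devi_Q_Suc_eq_step: "devi_Q \<gamma> P r Ssa (Suc n) = devi_step \<gamma> P r Ssa (devi_Q \<gamma> P r Ssa n)"
  by (simp add: devi_step_def)

lemma abs_devi_step_diff_le:
  fixes Q Q' :: "'s \<Rightarrow> 'a::finite \<Rightarrow> real"
  assumes "0 \<le> \<gamma>" "P \<noteq> {}"
    and P_range: "\<And>p x. p \<in> P \<Longrightarrow> 0 \<le> p x \<and> p x \<le> 1"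
    and P_sum: "\<And>p s a. p \<in> P \<Longrightarrow> (\<Sum>s'\<in>Ssa s a. p (s, a, s')) = 1"
    and "\<And>s a. \<bar>Q s a - Q' s a\<bar> \<le> c"
  shows "\<bar>devi_step \<gamma> P r Ssa Q s a - devi_step \<gamma> P r Ssa Q' s a\<bar> \<le> \<gamma> * c"
proof -
  let ?E = "\<lambda>Q p. \<Sum>s'\<in>Ssa s a. p (s, a, s') * devi_V Q s'"
  have "\<bar>?E Q p - ?E Q' p\<bar> \<le> c" if "p \<in> P" for p
    using P_range[OF that] P_sum[OF that] abs_devi_V_diff_le[OF assms(5)]
    by (intro abs_sum_stochastic_diff_le) auto
  then have "\<bar>(SUP p\<in>P. ?E Q p) - (SUP p\<in>P. ?E Q' p)\<bar> \<le> c"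
    using assms(2) P_range by (intro abs_cSUP_diff_le bdd_above_weighted_sum) auto
  then have "\<gamma> * \<bar>(SUP p\<in>P. ?E Q p) - (SUP p\<in>P. ?E Q' p)\<bar> \<le> \<gamma> * c"
    using assms(1) by (simp add: mult_left_mono)
  then show ?thesis
    using assms(1) by (simp add: devi_step_def abs_mult right_diff_distrib[symmetric])
qed

lemma abs_devi_Q_0_diff_1_le:
  assumes "\<And>s a. 0 \<le> r s a \<and> r s a \<le> 1" "\<gamma> < 1" "P \<noteq> {}"
    and P_sum: "\<And>p s a. p \<in> P \<Longrightarrow> (\<Sum>s'\<in>Ssa s a. p (s, a, s')) = 1"
  shows "\<bar>devi_Q \<gamma> P r Ssa 0 s a - devi_Q \<gamma> P r Ssa 1 s a\<bar> \<le> 1"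
proof -
  have "(SUP p\<in>P. \<Sum>s'\<in>Ssa s a. p (s, a, s') * devi_V (devi_Q \<gamma> P r Ssa 0) s')
      = (SUP p\<in>P. 1 / (1 - \<gamma>))"
    using P_sum by (intro SUP_cong) (simp_all add: devi_V_def sum_divide_distrib[symmetric])
  then have "devi_Q \<gamma> P r Ssa 1 s a = r s a + \<gamma> / (1 - \<gamma>)"
    using assms(3) by simp
  moreover have "1 / (1 - \<gamma>) - \<gamma> / (1 - \<gamma>) = 1"
    using assms(2) by (simp add: field_simps)
  ultimately show ?thesis
    using assms(1)[of s a] by simp
qed

lemma abs_devi_Q_Suc_diff_le:
  assumes "\<And>s a. 0 \<le> r s a \<and> r s a \<le> 1" "0 \<le> \<gamma>" "\<gamma> < 1" "P \<noteq> {}"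
    and "\<And>p x. p \<in> P \<Longrightarrow> 0 \<le> p x \<and> p x \<le> 1"
    and "\<And>p s a. p \<in> P \<Longrightarrow> (\<Sum>s'\<in>Ssa s a. p (s, a, s')) = 1"
  shows "\<bar>devi_Q \<gamma> P r Ssa n s a - devi_Q \<gamma> P r Ssa (Suc n) s a\<bar> \<le> \<gamma> ^ n"
proof (induction n arbitrary: s a)
  case 0
  show ?case
    using abs_devi_Q_0_diff_1_le[OF assms(1,3,4,6)] by simp
next
  case (Suc n)
  have "\<bar>devi_step \<gamma> P r Ssa (devi_Q \<gamma> P r Ssa n) s a
      - devi_step \<gamma> P r Ssa (devi_Q \<gamma> P r Ssa (Suc n)) s a\<bar> \<le> \<gamma> * \<gamma> ^ n"
    using assms(2,4,5,6) Suc.IH by (rule abs_devi_step_diff_le)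
  then show ?case
    by (simp only: devi_Q_Suc_eq_step[symmetric] power_Suc)
qed

theorem lemma22:
  fixes \<gamma> :: real
    and P :: "(('s::finite \<times> 'a::finite \<times> 's) \<Rightarrow> real) set"
    and r :: "'s \<Rightarrow> 'a \<Rightarrow> real"
    and Ssa :: "'s \<Rightarrow> 'a \<Rightarrow> 's set"
    and N :: nat and s :: 's and a :: 'a
  assumes r_range: "\<And>s a. 0 \<le> r s a \<and> r s a \<le> 1"
    and gamma: "0 \<le> \<gamma>" "\<gamma> < 1"
    and P_ne: "P \<noteq> {}"
    and P_compact: "compact P"
    and P_range: "\<And>p x. p \<in> P \<Longrightarrow> 0 \<le> p x \<and> p x \<le> 1"
    and P_sum: "\<And>p s a. p \<in> P \<Longrightarrow> (\<Sum>s'\<in>Ssa s a. p (s, a, s')) = 1"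
    and N: "N \<ge> 1"
  shows "devi_Q \<gamma> P r Ssa (N - 1) s a - devi_Q \<gamma> P r Ssa N s a \<le> \<gamma> ^ (N - 1)"
proof -
  obtain m where m: "N = Suc m"
    using N by (cases N) auto
  have "\<bar>devi_Q \<gamma> P r Ssa m s a - devi_Q \<gamma> P r Ssa (Suc m) s a\<bar> \<le> \<gamma> ^ m"
    using r_range gamma P_ne P_range P_sum by (rule abs_devi_Q_Suc_diff_le)
  then show ?thesis
    unfolding m by simp
qed

end
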